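(* Let $D>0$, $\Delta=2\sqrt{3D}$, and $\mathcal Q$ map a real number to the nearest point of $\Delta\mathbb Z$. Let $\mathbf X=(X_1,\dots,X_n)$ be a random vector of real random variables each having a density, let $\hat{\mathbf X}=(\hat X_1,\dots,\hat X_n)$ be a random vector taking finitely many values with $\frac1n\mathbb E\|\mathbf X-\hat{\mathbf X}\|^2\le D'$, and let $Z$ be uniform on $[-\Delta/2,\Delta/2]$, independent of $(\mathbf X,\hat{\mathbf X})$. Let $\mathbf Y=(\mathcal Q(X_1+Z),\dots,\mathcal Q(X_n+Z))$ (the same dither realization in every coordinate). Then $$H(\mathbf Y\mid\hat{\mathbf X},Z)\le\frac n2\log_2\!\Big[\frac{\pi e}{6}\Big(\frac{D'}{D}+1\Big)\Big].$$ In particular, if $D'=D$, then $H(\mathbf Y\mid\hat{\mathbf X},Z)\le\frac n2\log_2\frac{\pi e}{3}\approx 0.754\,n$.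
   Context: Logarithms are base 2; $H(\cdot\mid\cdot,Z)$ denotes conditional discrete entropy averaged over the continuous dither $Z$. *)

theory Defs
  imports "HOL-Probability.Probability"
begin

text \<open>Uniform scalar quantizer: maps x to a nearest point of the lattice Delta*Z
  (ties, a null set here, are broken upward by round).\<close>
definition quant :: "real \<Rightarrow> real \<Rightarrow> real" where
  "quant Delta x = Delta * of_int (round (x / Delta))"

definition lattice_vecs :: "real \<Rightarrow> nat \<Rightarrow> real list set" where
  "lattice_vecs Delta n = {ys. length ys = n \<and> set ys \<subseteq> range (\<lambda>k::int. Delta * of_int k)}"

end

theory Submission
  imports Defs
begin

text \<open>
  The bound is variational: for every sub-probability kernel \<open>q(y | w)\<close>, Gibbs' inequality gives
  \<open>H(Y | W) \<le> E[-log q(Y | W)]\<close>. Take \<open>W = (Xh, Z)\<close> and let the entries of \<open>Y\<close> be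
  independent Gaussians of variance \<open>\<sigma>\<^sup>2 = D + D'\<close> centred at \<open>Z + Xh ! i\<close>, restricted and
  renormalised to the lattice \<open>d\<int>\<close>. Then \<open>-log q\<close> splits into a quadratic term in the dithered
  quantisation error \<open>Q(X i + Z) - Z - Xh ! i\<close>, whose second moment over the dither is
  \<open>(X i - Xh ! i)\<^sup>2 + d\<^sup>2/12\<close>, and the logarithms \<open>log s\<close> of the normalising sums, bounded by
  \<open>(d s - 1) / ln b - log d\<close>; a normalising sum has mean \<open>1/d\<close> over the dither, because averaging
  the lattice sum over one period recovers the integral of the Gaussian density. Both averages are taken
  by integrating out \<open>Z\<close>, which is independent of \<open>(X, Xh)\<close>.
\<close>

lemma borel_measurable_round [measurable]: "(round :: real \<Rightarrow> int) \<in> borel \<rightarrow>\<^sub>M count_space UNIV"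
proof -
  have "(\<lambda>x::real. floor (x + 1/2)) \<in> borel \<rightarrow>\<^sub>M count_space UNIV"
    by (rule measurable_compose[OF _ measurable_real_floor]) measurable
  then show ?thesis
    by (simp add: round_def[abs_def])
qed

lemma borel_measurable_quant [measurable]: "quant d \<in> borel_measurable borel"
  unfolding quant_def by measurable

lemma AE_lattice_cover_count_le_one:
  fixes d :: real
  assumes "d > 0"
  shows "AE t in lborel. (\<integral>\<^sup>+k. indicator {-d/2..d/2} (d * of_int k - a - t) \<partial>count_space UNIV) \<le> 1"
proof -
  have "range (\<lambda>j::int. d * of_int j - d/2 - a) \<in> null_sets lborel"
    by (intro countable_imp_null_set_lborel) auto
  from AE_not_in[OF this] show ?thesis
  proof eventually_elim
    case (elim t)
    define K where "K = {k::int. d * of_int k - a - t \<in> {-d/2..d/2}}"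
    have "k' \<le> k" if "k \<in> K" "k' \<in> K" for k k'
    proof (rule ccontr)
      assume "\<not> k' \<le> k"
      then have "of_int k + 1 \<le> (of_int k' :: real)"
        by linarith
      then have "d * of_int k + d \<le> d * of_int k'"
        using mult_left_mono[OF _ less_imp_le[OF \<open>d > 0\<close>]] by (fastforce simp: algebra_simps)
      then have "t = d * of_int k' - d/2 - a"
        using that by (auto simp: K_def)
      with elim show False by auto
    qed
    then have "K \<subseteq> {k}" if "k \<in> K" for k
      using that by (auto intro: order.antisym)
    then have "emeasure (count_space UNIV) K \<le> 1"
    proof (cases "K = {}")
      case False
      then obtain k where "K = {k}"
        using \<open>\<And>k. k \<in> K \<Longrightarrow> K \<subseteq> {k}\<close> by blast
      then show ?thesis by simp
    qed simp
    moreover have "(\<lambda>k. indicator {-d/2..d/2} (d * of_int k - a - t)) = (indicator K :: int \<Rightarrow> ennreal)"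
      by (auto simp: K_def split: split_indicator)
    ultimately show ?case
      by simp
  qed
qed

lemma nn_integral_periodize_le:
  fixes h :: "real \<Rightarrow> ennreal" and d a :: real
  assumes [measurable]: "h \<in> borel_measurable borel" and "d > 0"
  shows "(\<integral>\<^sup>+z. (\<integral>\<^sup>+k. h (d * of_int k - z - a) \<partial>count_space UNIV) * indicator {-d/2..d/2} z \<partial>lborel)
         \<le> (\<integral>\<^sup>+s. h s \<partial>lborel)"
proof -
  interpret pair_sigma_finite lborel "count_space (UNIV :: int set)"
    by (intro pair_sigma_finite.intro lborel.sigma_finite_measure_axioms sigma_finite_measure_count_space)
  have meas_zk: "(\<lambda>(z, k::int). h (d * of_int k - z - a) * indicator {-d/2..d/2} z)
      \<in> borel_measurable (lborel \<Otimes>\<^sub>M count_space UNIV)"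
  proof -
    have "(\<lambda>x. (\<lambda>k::int. \<lambda>x. h (d * of_int k - fst x - a) * indicator {-d/2..d/2} (fst x)) (snd x) x)
        \<in> borel_measurable (lborel \<Otimes>\<^sub>M count_space UNIV)"
      by (rule measurable_compose_countable) measurable
    then show ?thesis
      by (simp add: case_prod_beta')
  qed
  have meas_sk: "(\<lambda>(s, k::int). h s * indicator {-d/2..d/2} (d * of_int k - a - s))
      \<in> borel_measurable (lborel \<Otimes>\<^sub>M count_space UNIV)"
  proof -
    have "(\<lambda>x. (\<lambda>k::int. \<lambda>x. h (fst x) * indicator {-d/2..d/2} (d * of_int k - a - fst x)) (snd x) x)
        \<in> borel_measurable (lborel \<Otimes>\<^sub>M count_space UNIV)"
      by (rule measurable_compose_countable) measurable
    then show ?thesis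
      by (simp add: case_prod_beta')
  qed
  have shift: "(\<integral>\<^sup>+z. h (d * of_int k - z - a) * indicator {-d/2..d/2} z \<partial>lborel)
      = (\<integral>\<^sup>+s. h s * indicator {-d/2..d/2} (d * of_int k - a - s) \<partial>lborel)" for k :: int
    using nn_integral_real_affine[where c = "-1" and t = "d * of_int k - a"
        and f = "\<lambda>s. h s * indicator {-d/2..d/2} (d * of_int k - a - s)"]
    by (simp add: algebra_simps)
  have "(\<integral>\<^sup>+z. (\<integral>\<^sup>+k. h (d * of_int k - z - a) \<partial>count_space UNIV) * indicator {-d/2..d/2} z \<partial>lborel)
      = (\<integral>\<^sup>+k. (\<integral>\<^sup>+z. h (d * of_int k - z - a) * indicator {-d/2..d/2} z \<partial>lborel) \<partial>count_space UNIV)"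
    using Fubini'[OF meas_zk] by (simp add: nn_integral_multc)
  also have "\<dots> = (\<integral>\<^sup>+s. h s * (\<integral>\<^sup>+k. indicator {-d/2..d/2} (d * of_int k - a - s) \<partial>count_space UNIV) \<partial>lborel)"
    unfolding shift using Fubini'[OF meas_sk] by (simp add: nn_integral_cmult)
  also have "\<dots> \<le> (\<integral>\<^sup>+s. h s \<partial>lborel)"
    using AE_lattice_cover_count_le_one[OF \<open>d > 0\<close>, of a]
    by (intro nn_integral_mono_AE) (auto elim!: eventually_mono dest: mult_left_mono[of _ 1 "h _"])
  finally show ?thesis .
qed

definition lattice_gauss_mass :: "real \<Rightarrow> real \<Rightarrow> real \<Rightarrow> ennreal" where
  "lattice_gauss_mass d \<sigma> t = (\<integral>\<^sup>+k. ennreal (normal_density 0 \<sigma> (d * of_int k - t)) \<partial>count_space (UNIV :: int set))"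

lemma borel_measurable_lattice_gauss_mass [measurable]: "lattice_gauss_mass d \<sigma> \<in> borel_measurable borel"
proof -
  interpret sigma_finite_measure "count_space (UNIV :: int set)"
    by (rule sigma_finite_measure_count_space)
  have "(\<lambda>x. (\<lambda>k::int. \<lambda>x. ennreal (normal_density 0 \<sigma> (d * of_int k - fst x))) (snd x) x)
      \<in> borel_measurable (borel \<Otimes>\<^sub>M count_space UNIV)"
    by (rule measurable_compose_countable) measurable
  then have "(\<lambda>x. ennreal (normal_density 0 \<sigma> (d * of_int (snd x) - fst x))) \<in> borel_measurable (borel \<Otimes>\<^sub>M count_space UNIV)"
    by simp
  from borel_measurable_nn_integral_fst[OF this] show ?thesis
    unfolding lattice_gauss_mass_def[abs_def] by simp
qed

lemma lattice_gauss_mass_pos: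
  assumes "\<sigma> > 0"
  shows "0 < lattice_gauss_mass d \<sigma> t"
proof -
  have "0 < ennreal (normal_density 0 \<sigma> (d * of_int 0 - t))"
    using normal_density_pos[OF assms] by simp
  also have "\<dots> \<le> lattice_gauss_mass d \<sigma> t"
    unfolding lattice_gauss_mass_def by (rule nn_integral_ge_point) simp
  finally show ?thesis .
qed

lemma nn_integral_lattice_gauss_mass_le:
  assumes "d > 0" and "\<sigma> > 0"
  shows "(\<integral>\<^sup>+z. lattice_gauss_mass d \<sigma> (z + a) * indicator {-d/2..d/2} z \<partial>lborel) \<le> 1"
proof -
  interpret prob_space "density lborel (normal_density 0 \<sigma>)"
    by (rule prob_space_normal_density[OF \<open>\<sigma> > 0\<close>])
  have "(\<integral>\<^sup>+z. lattice_gauss_mass d \<sigma> (z + a) * indicator {-d/2..d/2} z \<partial>lborel)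
      \<le> (\<integral>\<^sup>+s. ennreal (normal_density 0 \<sigma> s) \<partial>lborel)"
    using nn_integral_periodize_le[OF _ \<open>d > 0\<close>, of "\<lambda>s. ennreal (normal_density 0 \<sigma> s)" a]
    by (simp add: lattice_gauss_mass_def algebra_simps)
  also have "\<dots> = emeasure (density lborel (normal_density 0 \<sigma>)) UNIV"
    by (simp add: emeasure_density)
  finally show ?thesis
    using emeasure_space_1 by simp
qed

lemma nn_integral_quant_error_sq_le:
  assumes "d > 0"
  shows "(\<integral>\<^sup>+z. ennreal ((b + quant d (a + z) - a - z)\<^sup>2) * indicator {-d/2..d/2} z \<partial>lborel)
      \<le> ennreal (d * b\<^sup>2 + d^3/12)"
proof -
  let ?h = "\<lambda>u. ennreal ((b + u)\<^sup>2) * indicator {-d/2..d/2} u"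
  have "ennreal ((b + quant d (a + z) - a - z)\<^sup>2) \<le> (\<integral>\<^sup>+k. ?h (d * of_int k - z - a) \<partial>count_space UNIV)" for z
  proof -
    define k where "k = round ((a + z) / d)"
    have "\<bar>d * (of_int k - (a + z) / d)\<bar> \<le> d * (1/2)"
      using of_int_round_abs_le[of "(a + z) / d"] \<open>d > 0\<close> by (simp add: k_def abs_mult)
    moreover have "d * (of_int k - (a + z) / d) = d * of_int k - z - a"
      using \<open>d > 0\<close> by (simp add: field_simps)
    ultimately have "\<bar>d * of_int k - z - a\<bar> \<le> d/2"
      by simp
    then have "d * of_int k - z - a \<in> {-d/2..d/2}"
      by (simp only: atLeastAtMost_iff) linarith
    then have "?h (d * of_int k - z - a) = ennreal ((b + quant d (a + z) - a - z)\<^sup>2)"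
      by (simp add: quant_def k_def algebra_simps)
    then show ?thesis
      using nn_integral_ge_point[of k UNIV "\<lambda>k. ?h (d * of_int k - z - a)"] by simp
  qed
  then have "(\<integral>\<^sup>+z. ennreal ((b + quant d (a + z) - a - z)\<^sup>2) * indicator {-d/2..d/2} z \<partial>lborel)
      \<le> (\<integral>\<^sup>+z. (\<integral>\<^sup>+k. ?h (d * of_int k - z - a) \<partial>count_space UNIV) * indicator {-d/2..d/2} z \<partial>lborel)"
    by (intro nn_integral_mono mult_right_mono) simp_all
  also have "\<dots> \<le> (\<integral>\<^sup>+u. ?h u \<partial>lborel)"
    by (rule nn_integral_periodize_le[OF _ \<open>d > 0\<close>]) measurable
  also have "\<dots> = ennreal ((\<lambda>u. (b + u)^3/3) (d/2) - (\<lambda>u. (b + u)^3/3) (-d/2))"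
    using \<open>d > 0\<close> by (intro nn_integral_FTC_Icc) (auto intro!: derivative_eq_intros simp: power2_eq_square)
  also have "(\<lambda>u. (b + u)^3/3) (d/2) - (\<lambda>u. (b + u)^3/3) (-d/2) = d * b\<^sup>2 + d^3/12"
    by (simp add: power3_eq_cube power2_eq_square field_simps)
  finally show ?thesis .
qed

text \<open>Where the lattice sum is infinite, \<open>enn2real\<close> makes it \<open>0\<close> and the weight is \<open>x / 0 = 0\<close>.\<close>

definition lattice_gauss_pmf :: "real \<Rightarrow> real \<Rightarrow> real \<Rightarrow> real \<Rightarrow> real" where
  "lattice_gauss_pmf d \<sigma> t y = normal_density 0 \<sigma> (y - t) / enn2real (lattice_gauss_mass d \<sigma> t)"

lemma nn_integral_lattice_gauss_pmf:
  assumes "\<sigma> > 0" and "lattice_gauss_mass d \<sigma> t < \<infinity>"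
  shows "(\<integral>\<^sup>+k. ennreal (lattice_gauss_pmf d \<sigma> t (d * of_int k)) \<partial>count_space UNIV) = 1"
proof -
  have pos: "0 < enn2real (lattice_gauss_mass d \<sigma> t)"
    using assms lattice_gauss_mass_pos by (simp add: enn2real_positive_iff)
  have "(\<integral>\<^sup>+k. ennreal (lattice_gauss_pmf d \<sigma> t (d * of_int k)) \<partial>count_space UNIV)
      = (\<integral>\<^sup>+k. ennreal (normal_density 0 \<sigma> (d * of_int k - t)) / ennreal (enn2real (lattice_gauss_mass d \<sigma> t)) \<partial>count_space UNIV)"
    using pos by (intro nn_integral_cong) (simp add: lattice_gauss_pmf_def divide_ennreal)
  also have "\<dots> = lattice_gauss_mass d \<sigma> t / ennreal (enn2real (lattice_gauss_mass d \<sigma> t))"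
    by (simp add: nn_integral_divide lattice_gauss_mass_def)
  also have "\<dots> = 1"
    using assms lattice_gauss_mass_pos[OF assms(1), of d t]
    by (simp add: ennreal_enn2real_if ennreal_divide_self)
  finally show ?thesis .
qed

lemma lattice_vecs_round:
  assumes "d > 0" and "y \<in> lattice_vecs d n" and "i < n"
  shows "d * of_int (round (y ! i / d)) = y ! i"
proof -
  have "y ! i \<in> range (\<lambda>k::int. d * of_int k)"
    using assms(2,3) nth_mem[of i y] by (auto simp: lattice_vecs_def)
  then obtain k :: int where "y ! i = d * of_int k"
    by blast
  then show ?thesis
    using \<open>d > 0\<close> by simp
qed

lemma inj_on_lattice_vecs_round:
  assumes "d > 0"
  shows "inj_on (\<lambda>y i. if i < n then round (y ! i / d) else (0::int)) (lattice_vecs d n)"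
proof (rule inj_onI)
  fix y y' assume y: "y \<in> lattice_vecs d n" and y': "y' \<in> lattice_vecs d n"
    and eq: "(\<lambda>i. if i < n then round (y ! i / d) else (0::int)) = (\<lambda>i. if i < n then round (y' ! i / d) else 0)"
  have "y ! i = y' ! i" if "i < n" for i
    using fun_cong[OF eq, of i] that lattice_vecs_round[OF assms y that] lattice_vecs_round[OF assms y' that]
    by metis
  with y y' show "y = y'"
    by (auto simp: lattice_vecs_def intro: nth_equalityI)
qed

lemma nn_integral_prod_lattice_gauss_pmf_le:
  fixes t :: "nat \<Rightarrow> real"
  assumes "d > 0" and "\<sigma> > 0"
  shows "(\<integral>\<^sup>+y. ennreal (\<Prod>i<n. lattice_gauss_pmf d \<sigma> (t i) (y ! i)) \<partial>count_space (lattice_vecs d n)) \<le> 1"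
proof (cases "\<forall>i<n. lattice_gauss_mass d \<sigma> (t i) < \<infinity>")
  case False
  then obtain i where "i < n" "\<not> lattice_gauss_mass d \<sigma> (t i) < \<infinity>"
    by blast
  then have i: "i < n" "lattice_gauss_mass d \<sigma> (t i) = \<infinity>"
    by (simp_all add: not_less top_unique)
  then have "lattice_gauss_pmf d \<sigma> (t i) y' = 0" for y'
    by (simp add: lattice_gauss_pmf_def)
  then have "(\<Prod>i<n. lattice_gauss_pmf d \<sigma> (t i) (y ! i)) = 0" for y
    using i by (intro prod_zero) auto
  then show ?thesis
    by (simp del: prod_zero_iff)
next
  case True
  \<comment> \<open>Lattice vectors are coded by their integer coordinates; the product weights are then a product pmf.\<close>
  define P where "P = Pi_pmf {..<n} (0::int) (\<lambda>i. embed_pmf (\<lambda>k. lattice_gauss_pmf d \<sigma> (t i) (d * of_int k)))"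
  define index where "index y = (\<lambda>i. if i < n then round (y ! i / d) else (0::int))" for y :: "real list"
  have inj: "inj_on index (lattice_vecs d n)"
    unfolding index_def by (rule inj_on_lattice_vecs_round[OF \<open>d > 0\<close>])
  have pmf_index: "pmf P (index y) = (\<Prod>i<n. lattice_gauss_pmf d \<sigma> (t i) (y ! i))" if "y \<in> lattice_vecs d n" for y
  proof -
    have "pmf P (index y) = (\<Prod>i<n. pmf (embed_pmf (\<lambda>k. lattice_gauss_pmf d \<sigma> (t i) (d * of_int k))) (index y i))"
      unfolding P_def by (rule pmf_Pi') (auto simp: index_def)
    also have "\<dots> = (\<Prod>i<n. lattice_gauss_pmf d \<sigma> (t i) (d * of_int (index y i)))"
      using True \<open>\<sigma> > 0\<close>
      by (intro prod.cong refl pmf_embed_pmf nn_integral_lattice_gauss_pmf) (auto simp: lattice_gauss_pmf_def)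
    finally show ?thesis
      using that \<open>d > 0\<close> by (simp add: index_def lattice_vecs_round)
  qed
  have "(\<integral>\<^sup>+y. ennreal (\<Prod>i<n. lattice_gauss_pmf d \<sigma> (t i) (y ! i)) \<partial>count_space (lattice_vecs d n))
      = (\<integral>\<^sup>+y. ennreal (pmf P (index y)) \<partial>count_space (lattice_vecs d n))"
    by (intro nn_integral_cong) (simp add: pmf_index)
  also have "\<dots> = emeasure (measure_pmf P) (index ` lattice_vecs d n)"
    by (rule nn_integral_pmf'[OF inj])
  finally show ?thesis
    by (simp add: measure_pmf.emeasure_le_1)
qed

lemma log_le_minus_one_div_ln:
  fixes b x :: real
  assumes "b > 1" and "x > 0"
  shows "log b x \<le> (x - 1) / ln b"
  unfolding log_def using assms ln_le_minus_one[of x] by (simp add: divide_right_mono)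

lemma absolutely_continuous_count_space_pair:
  fixes H :: "'a \<Rightarrow> 'c \<times> 'b"
  assumes "countable C" and "sigma_finite_measure N"
    and H [measurable]: "H \<in> M \<rightarrow>\<^sub>M count_space C \<Otimes>\<^sub>M N"
    and ac: "absolutely_continuous N (distr M N (\<lambda>\<omega>. snd (H \<omega>)))"
  shows "absolutely_continuous (count_space C \<Otimes>\<^sub>M N) (distr M (count_space C \<Otimes>\<^sub>M N) H)"
  unfolding absolutely_continuous_def
proof
  interpret N: sigma_finite_measure N by fact
  fix A assume A: "A \<in> null_sets (count_space C \<Otimes>\<^sub>M N)"
  then have A_sets: "A \<in> sets (count_space C \<Otimes>\<^sub>M N)"
    by auto
  define U where "U = (\<Union>c\<in>C. Pair c -` A)"
  have "(\<integral>\<^sup>+c. emeasure N (Pair c -` A) \<partial>count_space C) = 0"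
    using A N.emeasure_pair_measure_alt[OF A_sets] by auto
  then have "AE c in count_space C. emeasure N (Pair c -` A) = 0"
    by (subst (asm) nn_integral_0_iff_AE) auto
  then have "Pair c -` A \<in> null_sets N" if "c \<in> C" for c
    using that sets_Pair1[OF A_sets] by (auto simp: AE_count_space)
  then have U_null: "U \<in> null_sets N"
    unfolding U_def by (rule null_sets_UN'[OF \<open>countable C\<close>])
  then have U_sets: "U \<in> sets N"
    by auto
  have "emeasure M ((\<lambda>\<omega>. snd (H \<omega>)) -` U \<inter> space M) = emeasure (distr M N (\<lambda>\<omega>. snd (H \<omega>))) U"
    by (rule emeasure_distr[symmetric]) (simp_all add: U_sets)
  also have "\<dots> = 0"
    using ac U_null unfolding absolutely_continuous_def by auto
  finally have U_preimage: "emeasure M ((\<lambda>\<omega>. snd (H \<omega>)) -` U \<inter> space M) = 0" .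
  have "H -` A \<inter> space M \<subseteq> (\<lambda>\<omega>. snd (H \<omega>)) -` U \<inter> space M"
  proof
    fix \<omega> assume \<omega>: "\<omega> \<in> H -` A \<inter> space M"
    then have "fst (H \<omega>) \<in> C"
      using measurable_space[OF H] by (force simp: space_pair_measure)
    with \<omega> show "\<omega> \<in> (\<lambda>\<omega>. snd (H \<omega>)) -` U \<inter> space M"
      unfolding U_def by force
  qed
  then have "emeasure M (H -` A \<inter> space M) \<le> emeasure M ((\<lambda>\<omega>. snd (H \<omega>)) -` U \<inter> space M)"
    by (rule emeasure_mono) (use U_sets in measurable)
  with U_preimage have "emeasure M (H -` A \<inter> space M) = 0"
    by simp
  then show "A \<in> null_sets (distr M (count_space C \<Otimes>\<^sub>M N) H)"
    using A_sets by (simp add: null_sets_def emeasure_distr)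
qed

lemma AE_RN_deriv_distr_pos:
  assumes N: "sigma_finite_measure N" and [measurable]: "H \<in> M \<rightarrow>\<^sub>M N"
    and ac: "absolutely_continuous N (distr M N H)" and "sigma_finite_measure (distr M N H)"
  shows "AE \<omega> in M. 0 < enn2real (RN_deriv N (distr M N H) (H \<omega>))"
proof -
  define R where "R = RN_deriv N (distr M N H)"
  have [measurable]: "R \<in> borel_measurable N"
    unfolding R_def by simp
  have density_R: "distr M N H = density N R"
    unfolding R_def by (rule sigma_finite_measure.density_RN_deriv[OF N ac, symmetric]) simp
  have "AE x in N. R x \<noteq> \<infinity>"
    unfolding R_def using assms by (intro sigma_finite_measure.RN_deriv_finite) simp_all
  then have "AE x in distr M N H. 0 < enn2real (R x)"
    unfolding density_R
    by (subst AE_density) (auto elim!: eventually_mono simp: enn2real_positive_iff less_top)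
  then show ?thesis
    unfolding R_def by (subst (asm) AE_distr_iff) auto
qed

lemma (in prob_space) integral_le_of_nn_integral_bound:
  assumes "integrable M f" and le: "AE x in M. f x \<le> g x + c"
    and [measurable]: "g \<in> borel_measurable M" and g_nonneg: "\<And>x. 0 \<le> g x"
    and g_int: "(\<integral>\<^sup>+x. ennreal (g x) \<partial>M) \<le> ennreal K" and "0 \<le> K"
  shows "integral\<^sup>L M f \<le> K + c"
proof -
  have [measurable]: "f \<in> borel_measurable M"
    using \<open>integrable M f\<close> by auto
  have "integral\<^sup>L M f - c = integral\<^sup>L M (\<lambda>x. f x - c)"
    using \<open>integrable M f\<close> by (simp add: prob_space)
  also have "\<dots> \<le> integral\<^sup>L M (\<lambda>x. max (f x - c) 0)"
    using \<open>integrable M f\<close> by (intro integral_mono) auto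
  also have "\<dots> = enn2real (\<integral>\<^sup>+x. ennreal (max (f x - c) 0) \<partial>M)"
    by (rule integral_eq_nn_integral) auto
  also have "\<dots> \<le> enn2real (ennreal K)"
  proof (rule enn2real_mono)
    have "(\<integral>\<^sup>+x. ennreal (max (f x - c) 0) \<partial>M) \<le> (\<integral>\<^sup>+x. ennreal (g x) \<partial>M)"
      using le by (intro nn_integral_mono_AE) (auto elim!: eventually_mono intro!: ennreal_leI simp: g_nonneg)
    with g_int show "(\<integral>\<^sup>+x. ennreal (max (f x - c) 0) \<partial>M) \<le> ennreal K"
      by simp
  qed simp
  finally show ?thesis
    using \<open>0 \<le> K\<close> by simp
qed

lemma nn_integral_add_scaled_le:
  assumes [measurable]: "f \<in> borel_measurable M" "h \<in> borel_measurable M"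
    and "\<And>x. 0 \<le> f x" "\<And>x. 0 \<le> h x" "0 \<le> \<alpha>" "0 \<le> \<beta>"
    and "(\<integral>\<^sup>+x. ennreal (f x) \<partial>M) \<le> ennreal A" "(\<integral>\<^sup>+x. ennreal (h x) \<partial>M) \<le> ennreal B"
    and "0 \<le> A" "0 \<le> B"
  shows "(\<integral>\<^sup>+x. ennreal (\<alpha> * f x + \<beta> * h x) \<partial>M) \<le> ennreal (\<alpha> * A + \<beta> * B)"
proof -
  have "(\<integral>\<^sup>+x. ennreal (\<alpha> * f x + \<beta> * h x) \<partial>M)
      = ennreal \<alpha> * (\<integral>\<^sup>+x. ennreal (f x) \<partial>M) + ennreal \<beta> * (\<integral>\<^sup>+x. ennreal (h x) \<partial>M)"
    using assms(3-6)
    by (simp add: ennreal_plus ennreal_mult nn_integral_add nn_integral_cmult)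
  also have "\<dots> \<le> ennreal \<alpha> * ennreal A + ennreal \<beta> * ennreal B"
    using assms(7,8) by (intro add_mono mult_left_mono) auto
  also have "\<dots> = ennreal (\<alpha> * A + \<beta> * B)"
    using assms(5,6,9,10) by (simp add: ennreal_plus ennreal_mult)
  finally show ?thesis .
qed

lemma (in prob_space) distr_pair_eq_pair_measure_of_indep_set:
  assumes [measurable]: "V \<in> M \<rightarrow>\<^sub>M N" "Z \<in> M \<rightarrow>\<^sub>M L"
    and indep: "indep_set {V -` A \<inter> space M | A. A \<in> sets N} {Z -` B \<inter> space M | B. B \<in> sets L}"
  shows "distr M N V \<Otimes>\<^sub>M distr M L Z = distr M (N \<Otimes>\<^sub>M L) (\<lambda>\<omega>. (V \<omega>, Z \<omega>))"
proof (rule pair_measure_eqI)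
  show "sigma_finite_measure (distr M N V)" "sigma_finite_measure (distr M L Z)"
    by (simp_all add: prob_space_imp_sigma_finite prob_space_distr)
  show "sets (distr M N V \<Otimes>\<^sub>M distr M L Z) = sets (distr M (N \<Otimes>\<^sub>M L) (\<lambda>\<omega>. (V \<omega>, Z \<omega>)))"
    by (simp only: sets_pair_measure_cong[OF sets_distr sets_distr] sets_distr)
next
  fix A B assume "A \<in> sets (distr M N V)" "B \<in> sets (distr M L Z)"
  then have [measurable]: "A \<in> sets N" "B \<in> sets L"
    by simp_all
  have "(\<lambda>\<omega>. (V \<omega>, Z \<omega>)) -` (A \<times> B) \<inter> space M = (V -` A \<inter> space M) \<inter> (Z -` B \<inter> space M)"
    by auto
  moreover have "prob ((V -` A \<inter> space M) \<inter> (Z -` B \<inter> space M)) = prob (V -` A \<inter> space M) * prob (Z -` B \<inter> space M)"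
    by (rule indep_setD[OF indep]) auto
  ultimately show "emeasure (distr M N V) A * emeasure (distr M L Z) B
      = emeasure (distr M (N \<Otimes>\<^sub>M L) (\<lambda>\<omega>. (V \<omega>, Z \<omega>))) (A \<times> B)"
    by (simp add: emeasure_distr emeasure_eq_measure ennreal_mult)
qed

lemma (in prob_space) nn_integral_indep_set_pair:
  assumes [measurable]: "V \<in> M \<rightarrow>\<^sub>M N" "Z \<in> M \<rightarrow>\<^sub>M L"
    and indep: "indep_set {V -` A \<inter> space M | A. A \<in> sets N} {Z -` B \<inter> space M | B. B \<in> sets L}"
    and f [measurable]: "f \<in> borel_measurable (N \<Otimes>\<^sub>M L)"
  shows "(\<integral>\<^sup>+\<omega>. f (V \<omega>, Z \<omega>) \<partial>M) = (\<integral>\<^sup>+\<omega>. (\<integral>\<^sup>+z. f (V \<omega>, z) \<partial>distr M L Z) \<partial>M)"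
proof -
  interpret Z: prob_space "distr M L Z"
    by (rule prob_space_distr) simp
  have "(\<integral>\<^sup>+\<omega>. f (V \<omega>, Z \<omega>) \<partial>M) = (\<integral>\<^sup>+x. f x \<partial>distr M (N \<Otimes>\<^sub>M L) (\<lambda>\<omega>. (V \<omega>, Z \<omega>)))"
    by (simp add: nn_integral_distr)
  also have "\<dots> = (\<integral>\<^sup>+x. f x \<partial>(distr M N V \<Otimes>\<^sub>M distr M L Z))"
    by (simp add: distr_pair_eq_pair_measure_of_indep_set[OF _ _ indep])
  also have "\<dots> = (\<integral>\<^sup>+v. (\<integral>\<^sup>+z. f (v, z) \<partial>distr M L Z) \<partial>distr M N V)"
    using f by (intro Z.nn_integral_fst[symmetric])
      (simp only: measurable_cong_sets[OF sets_pair_measure_cong[OF sets_distr sets_distr] refl])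
  also have "\<dots> = (\<integral>\<^sup>+\<omega>. (\<integral>\<^sup>+z. f (V \<omega>, z) \<partial>distr M L Z) \<partial>M)"
    by (rule nn_integral_distr) measurable
  finally show ?thesis .
qed

lemma (in prob_space) nn_integral_RN_deriv_ratio_le:
  fixes q :: "'y \<times> 'w \<Rightarrow> real"
  assumes S: "sigma_finite_measure S" and T: "sigma_finite_measure T"
    and [measurable]: "Y \<in> M \<rightarrow>\<^sub>M S" "W \<in> M \<rightarrow>\<^sub>M T"
    and ac_YW: "absolutely_continuous (S \<Otimes>\<^sub>M T) (distr M (S \<Otimes>\<^sub>M T) (\<lambda>\<omega>. (Y \<omega>, W \<omega>)))"
    and ac_W: "absolutely_continuous T (distr M T W)"
    and [measurable]: "q \<in> borel_measurable (S \<Otimes>\<^sub>M T)" and q_nonneg: "\<And>x. 0 \<le> q x"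
    and q_le_1: "\<And>w. (\<integral>\<^sup>+y. ennreal (q (y, w)) \<partial>S) \<le> 1"
  defines "p \<equiv> RN_deriv (S \<Otimes>\<^sub>M T) (distr M (S \<Otimes>\<^sub>M T) (\<lambda>\<omega>. (Y \<omega>, W \<omega>)))"
    and "r \<equiv> RN_deriv T (distr M T W)"
  shows "(\<integral>\<^sup>+\<omega>. ennreal (enn2real (r (W \<omega>)) * q (Y \<omega>, W \<omega>) / enn2real (p (Y \<omega>, W \<omega>))) \<partial>M) \<le> 1"
proof -
  interpret ST: pair_sigma_finite S T
    by (intro pair_sigma_finite.intro S T)
  have ST: "sigma_finite_measure (S \<Otimes>\<^sub>M T)"
    by (intro sigma_finite_pair_measure S T)
  have [measurable]: "p \<in> borel_measurable (S \<Otimes>\<^sub>M T)" "r \<in> borel_measurable T"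
    by (simp_all add: p_def r_def)
  have "(\<integral>\<^sup>+\<omega>. ennreal (enn2real (r (W \<omega>)) * q (Y \<omega>, W \<omega>) / enn2real (p (Y \<omega>, W \<omega>))) \<partial>M)
      = (\<integral>\<^sup>+x. ennreal (enn2real (r (snd x)) * q x / enn2real (p x)) \<partial>distr M (S \<Otimes>\<^sub>M T) (\<lambda>\<omega>. (Y \<omega>, W \<omega>)))"
    by (subst nn_integral_distr) auto
  also have "distr M (S \<Otimes>\<^sub>M T) (\<lambda>\<omega>. (Y \<omega>, W \<omega>)) = density (S \<Otimes>\<^sub>M T) p"
    unfolding p_def by (rule sigma_finite_measure.density_RN_deriv[OF ST ac_YW, symmetric]) simp
  also have "(\<integral>\<^sup>+x. ennreal (enn2real (r (snd x)) * q x / enn2real (p x)) \<partial>density (S \<Otimes>\<^sub>M T) p)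
      = (\<integral>\<^sup>+x. p x * ennreal (enn2real (r (snd x)) * q x / enn2real (p x)) \<partial>(S \<Otimes>\<^sub>M T))"
    by (intro nn_integral_density) auto
  also have "\<dots> \<le> (\<integral>\<^sup>+x. ennreal (enn2real (r (snd x)) * q x) \<partial>(S \<Otimes>\<^sub>M T))"
  proof (intro nn_integral_mono)
    fix x
    show "p x * ennreal (enn2real (r (snd x)) * q x / enn2real (p x)) \<le> ennreal (enn2real (r (snd x)) * q x)"
      using q_nonneg[of x] by (cases "p x") (auto simp: ennreal_mult[symmetric])
  qed
  also have "\<dots> = (\<integral>\<^sup>+w. (\<integral>\<^sup>+y. ennreal (enn2real (r w) * q (y, w)) \<partial>S) \<partial>T)"
    by (subst ST.nn_integral_snd[symmetric]) auto
  also have "\<dots> = (\<integral>\<^sup>+w. ennreal (enn2real (r w)) * (\<integral>\<^sup>+y. ennreal (q (y, w)) \<partial>S) \<partial>T)"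
    by (intro nn_integral_cong) (simp add: ennreal_mult q_nonneg nn_integral_cmult)
  also have "\<dots> \<le> (\<integral>\<^sup>+w. r w \<partial>T)"
  proof (intro nn_integral_mono)
    fix w
    have "ennreal (enn2real (r w)) * (\<integral>\<^sup>+y. ennreal (q (y, w)) \<partial>S) \<le> ennreal (enn2real (r w)) * 1"
      using q_le_1 by (rule mult_left_mono) simp
    also have "\<dots> \<le> r w"
      by (cases "r w") auto
    finally show "ennreal (enn2real (r w)) * (\<integral>\<^sup>+y. ennreal (q (y, w)) \<partial>S) \<le> r w" .
  qed
  also have "\<dots> = emeasure (density T r) (space T)"
    by (simp add: emeasure_density)
  also have "density T r = distr M T W"
    unfolding r_def by (rule sigma_finite_measure.density_RN_deriv[OF T ac_W]) simp
  also have "emeasure (distr M T W) (space T) = 1"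
    using prob_space.emeasure_space_1[OF prob_space_distr, of W T] by simp
  finally show ?thesis .
qed

lemma neg_log_ratio_le:
  fixes b p r q :: real
  assumes "b > 1" and "p > 0" and "r > 0" and "q > 0"
  shows "- log b (p / r) \<le> - log b q + (r * q / p - 1) / ln b"
proof -
  have "- log b (p / r) = log b (r * q / p) - log b q"
    using assms by (simp add: log_divide log_mult)
  with log_le_minus_one_div_ln[of b "r * q / p"] assms show ?thesis
    by simp
qed

lemma (in prob_space) conditional_entropy_le_cross_entropy:
  fixes q :: "'y \<times> 'w \<Rightarrow> real" and g :: "'a \<Rightarrow> real"
  assumes "b > 1" and S: "sigma_finite_measure S" and T: "sigma_finite_measure T"
    and [measurable]: "Y \<in> M \<rightarrow>\<^sub>M S" "W \<in> M \<rightarrow>\<^sub>M T"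
    and ac_YW: "absolutely_continuous (S \<Otimes>\<^sub>M T) (distr M (S \<Otimes>\<^sub>M T) (\<lambda>\<omega>. (Y \<omega>, W \<omega>)))"
    and ac_W: "absolutely_continuous T (distr M T W)"
    and [measurable]: "q \<in> borel_measurable (S \<Otimes>\<^sub>M T)" and q_nonneg: "\<And>x. 0 \<le> q x"
    and q_le_1: "\<And>w. (\<integral>\<^sup>+y. ennreal (q (y, w)) \<partial>S) \<le> 1"
    and q_pos: "AE \<omega> in M. 0 < q (Y \<omega>, W \<omega>)"
    and bound: "AE \<omega> in M. - log b (q (Y \<omega>, W \<omega>)) \<le> g \<omega> + c"
    and [measurable]: "g \<in> borel_measurable M" and g_nonneg: "\<And>\<omega>. 0 \<le> g \<omega>"
    and g_int: "(\<integral>\<^sup>+\<omega>. ennreal (g \<omega>) \<partial>M) \<le> ennreal K" and "0 \<le> K"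
    and "0 \<le> K + c"
  shows "conditional_entropy b S T Y W \<le> K + c"
proof -
  define p where "p = RN_deriv (S \<Otimes>\<^sub>M T) (distr M (S \<Otimes>\<^sub>M T) (\<lambda>\<omega>. (Y \<omega>, W \<omega>)))"
  define r where "r = RN_deriv T (distr M T W)"
  define B where "B \<omega> = enn2real (r (W \<omega>)) * q (Y \<omega>, W \<omega>) / enn2real (p (Y \<omega>, W \<omega>))" for \<omega>
  have [measurable]: "p \<in> borel_measurable (S \<Otimes>\<^sub>M T)" "r \<in> borel_measurable T"
    by (simp_all add: p_def r_def)
  have B_int: "(\<integral>\<^sup>+\<omega>. ennreal (B \<omega>) \<partial>M) \<le> 1"
    unfolding B_def p_def r_def
    by (rule nn_integral_RN_deriv_ratio_le[OF S T _ _ ac_YW ac_W _ q_nonneg q_le_1]) simp_all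
  have ST: "sigma_finite_measure (S \<Otimes>\<^sub>M T)"
    by (intro sigma_finite_pair_measure S T)
  have p_pos: "AE \<omega> in M. 0 < enn2real (p (Y \<omega>, W \<omega>))"
    unfolding p_def
    by (rule AE_RN_deriv_distr_pos[OF ST _ ac_YW]) (simp_all add: prob_space_imp_sigma_finite prob_space_distr)
  have r_pos: "AE \<omega> in M. 0 < enn2real (r (W \<omega>))"
    unfolding r_def
    by (rule AE_RN_deriv_distr_pos[OF T _ ac_W]) (simp_all add: prob_space_imp_sigma_finite prob_space_distr)
  define f where "f \<omega> = - log b (enn2real (p (Y \<omega>, W \<omega>)) / enn2real (r (W \<omega>)))" for \<omega>
  have "conditional_entropy b S T Y W = integral\<^sup>L M f"
    unfolding conditional_entropy_def p_def[symmetric] r_def[symmetric] f_def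
    by (subst integral_distr) auto
  also have "\<dots> \<le> K + c"
  proof (cases "integrable M f")
    case True
    have f_le: "AE \<omega> in M. f \<omega> \<le> (g \<omega> + B \<omega> / ln b) + (c - 1 / ln b)"
      using p_pos r_pos q_pos bound
    proof eventually_elim
      case (elim \<omega>)
      then show ?case
        using neg_log_ratio_le[OF \<open>b > 1\<close> elim(1,2,3)]
        by (simp add: f_def B_def diff_divide_distrib)
    qed
    have [measurable]: "B \<in> borel_measurable M"
      unfolding B_def by measurable
    have B_nonneg: "0 \<le> B \<omega>" for \<omega>
      by (simp add: B_def q_nonneg)
    have "(\<integral>\<^sup>+\<omega>. ennreal (1 * g \<omega> + 1 / ln b * B \<omega>) \<partial>M) \<le> ennreal (1 * K + 1 / ln b * 1)"
      using \<open>b > 1\<close> \<open>0 \<le> K\<close> g_int B_int g_nonneg B_nonneg by (intro nn_integral_add_scaled_le) auto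
    then have "integral\<^sup>L M f \<le> (K + 1 / ln b) + (c - 1 / ln b)"
      using \<open>0 \<le> K\<close> \<open>b > 1\<close> g_nonneg B_nonneg
      by (intro integral_le_of_nn_integral_bound[OF True f_le]) auto
    then show ?thesis
      by simp
  next
    case False
    \<comment> \<open>The Bochner integral is then \<open>0\<close>; this is the only use of \<open>0 \<le> K + c\<close>.\<close>
    then show ?thesis
      using \<open>0 \<le> K + c\<close> by (simp add: not_integrable_integral_eq)
  qed
  finally show ?thesis .
qed

lemma (in prob_space) nn_integral_uniform_dither:
  fixes d :: real
  assumes [measurable]: "V \<in> M \<rightarrow>\<^sub>M N" "Z \<in> borel_measurable M"
    and indep: "indep_set {V -` A \<inter> space M | A. A \<in> sets N} {Z -` B \<inter> space M | B. B \<in> sets lborel}"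
    and "d > 0" and Z_unif: "distr M lborel Z = uniform_measure lborel {-d/2..d/2}"
    and [measurable]: "f \<in> borel_measurable (N \<Otimes>\<^sub>M borel)"
  shows "(\<integral>\<^sup>+\<omega>. f (V \<omega>, Z \<omega>) \<partial>M)
    = (\<integral>\<^sup>+\<omega>. (\<integral>\<^sup>+z. f (V \<omega>, z) * indicator {-d/2..d/2} z \<partial>lborel) / d \<partial>M)"
proof -
  have "(\<integral>\<^sup>+\<omega>. f (V \<omega>, Z \<omega>) \<partial>M) = (\<integral>\<^sup>+\<omega>. (\<integral>\<^sup>+z. f (V \<omega>, z) \<partial>distr M lborel Z) \<partial>M)"
    by (rule nn_integral_indep_set_pair[OF _ _ indep]) simp_all
  also have "\<dots> = (\<integral>\<^sup>+\<omega>. (\<integral>\<^sup>+z. f (V \<omega>, z) * indicator {-d/2..d/2} z \<partial>lborel) / d \<partial>M)"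
    using \<open>d > 0\<close> by (intro nn_integral_cong) (simp add: Z_unif nn_integral_uniform_measure)
  finally show ?thesis .
qed

lemma (in prob_space) nn_integral_lattice_gauss_mass_dither_le:
  fixes d :: real
  assumes [measurable]: "V \<in> M \<rightarrow>\<^sub>M N" "Z \<in> borel_measurable M"
    and indep: "indep_set {V -` A \<inter> space M | A. A \<in> sets N} {Z -` B \<inter> space M | B. B \<in> sets lborel}"
    and "d > 0" and "distr M lborel Z = uniform_measure lborel {-d/2..d/2}"
    and "\<sigma> > 0" and [measurable]: "a \<in> borel_measurable N"
  shows "(\<integral>\<^sup>+\<omega>. lattice_gauss_mass d \<sigma> (Z \<omega> + a (V \<omega>)) \<partial>M) \<le> ennreal (1 / d)"
proof -
  have "(\<integral>\<^sup>+\<omega>. lattice_gauss_mass d \<sigma> (Z \<omega> + a (V \<omega>)) \<partial>M)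
      = (\<integral>\<^sup>+\<omega>. (\<integral>\<^sup>+z. lattice_gauss_mass d \<sigma> (z + a (V \<omega>)) * indicator {-d/2..d/2} z \<partial>lborel) / d \<partial>M)"
    using nn_integral_uniform_dither[OF _ _ indep \<open>d > 0\<close> assms(5), of "\<lambda>(v, z). lattice_gauss_mass d \<sigma> (z + a v)"]
    by simp
  also have "\<dots> \<le> (\<integral>\<^sup>+\<omega>. 1 / ennreal d \<partial>M)"
    using nn_integral_lattice_gauss_mass_le[OF \<open>d > 0\<close> \<open>\<sigma> > 0\<close>]
    by (intro nn_integral_mono divide_right_mono_ennreal)
  also have "\<dots> = ennreal (1 / d)"
    using \<open>d > 0\<close> by (simp add: emeasure_space_1 divide_ennreal[symmetric])
  finally show ?thesis .
qed

lemma (in prob_space) nn_integral_dithered_quant_error_le: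
  fixes n :: nat and d :: real and x a :: "nat \<Rightarrow> 'v \<Rightarrow> real"
  assumes [measurable]: "V \<in> M \<rightarrow>\<^sub>M N" "Z \<in> borel_measurable M"
    and indep: "indep_set {V -` A \<inter> space M | A. A \<in> sets N} {Z -` B \<inter> space M | B. B \<in> sets lborel}"
    and "d > 0" and Z_unif: "distr M lborel Z = uniform_measure lborel {-d/2..d/2}"
    and x_meas: "\<And>i. i < n \<Longrightarrow> x i \<in> borel_measurable N"
    and a_meas: "\<And>i. i < n \<Longrightarrow> a i \<in> borel_measurable N"
  shows "(\<integral>\<^sup>+\<omega>. ennreal (\<Sum>i<n. (quant d (x i (V \<omega>) + Z \<omega>) - Z \<omega> - a i (V \<omega>))\<^sup>2) \<partial>M)
    \<le> (\<integral>\<^sup>+\<omega>. ennreal (\<Sum>i<n. (x i (V \<omega>) - a i (V \<omega>))\<^sup>2) \<partial>M) + ennreal (n * d\<^sup>2 / 12)"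
proof -
  define e where "e v z = (\<Sum>i<n. (quant d (x i v + z) - z - a i v)\<^sup>2)" for v z
  have e_meas: "(\<lambda>(v, z). ennreal (e v z)) \<in> borel_measurable (N \<Otimes>\<^sub>M borel)"
    unfolding e_def using x_meas a_meas
    by (auto intro!: measurable_compose[OF _ measurable_ennreal] borel_measurable_sum measurable_compose[OF _ borel_measurable_quant]
        measurable_compose[OF measurable_fst] simp: split_beta')
  have "(\<integral>\<^sup>+z. ennreal (e v z) * indicator {-d/2..d/2} z \<partial>lborel) / d
      \<le> ennreal (\<Sum>i<n. (x i v - a i v)\<^sup>2) + ennreal (n * d\<^sup>2 / 12)" for v
  proof -
    define R where "R = (\<Sum>i<n. (x i v - a i v)\<^sup>2) + n * d\<^sup>2 / 12"
    have "(\<integral>\<^sup>+z. ennreal (e v z) * indicator {-d/2..d/2} z \<partial>lborel)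
        = (\<integral>\<^sup>+z. (\<Sum>i<n. ennreal ((quant d (x i v + z) - z - a i v)\<^sup>2) * indicator {-d/2..d/2} z) \<partial>lborel)"
      unfolding e_def by (intro nn_integral_cong, subst sum_distrib_right[symmetric], subst sum_ennreal) auto
    also have "\<dots> = (\<Sum>i<n. \<integral>\<^sup>+z. ennreal (((x i v - a i v) + quant d (x i v + z) - x i v - z)\<^sup>2) * indicator {-d/2..d/2} z \<partial>lborel)"
      by (subst nn_integral_sum) (auto simp: algebra_simps)
    also have "\<dots> \<le> (\<Sum>i<n. ennreal (d * (x i v - a i v)\<^sup>2 + d^3/12))"
      by (intro sum_mono nn_integral_quant_error_sq_le \<open>d > 0\<close>)
    also have "\<dots> = ennreal (\<Sum>i<n. d * (x i v - a i v)\<^sup>2 + d^3/12)"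
      using \<open>d > 0\<close> by (intro sum_ennreal) simp
    also have "(\<Sum>i<n. d * (x i v - a i v)\<^sup>2 + d^3/12) = d * R"
      by (simp add: R_def sum.distrib sum_distrib_left[symmetric] distrib_left power3_eq_cube power2_eq_square)
    finally have "(\<integral>\<^sup>+z. ennreal (e v z) * indicator {-d/2..d/2} z \<partial>lborel) / d \<le> ennreal (d * R) / d"
      by (rule divide_right_mono_ennreal)
    also have "ennreal (d * R) / d = ennreal R"
      using \<open>d > 0\<close> by (simp add: R_def divide_ennreal sum_nonneg)
    finally show ?thesis
      by (simp add: R_def ennreal_plus[symmetric] sum_nonneg del: ennreal_plus)
  qed
  then have "(\<integral>\<^sup>+\<omega>. ennreal (e (V \<omega>) (Z \<omega>)) \<partial>M)
      \<le> (\<integral>\<^sup>+\<omega>. ennreal (\<Sum>i<n. (x i (V \<omega>) - a i (V \<omega>))\<^sup>2) + ennreal (n * d\<^sup>2 / 12) \<partial>M)"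
    using nn_integral_uniform_dither[OF _ _ indep \<open>d > 0\<close> Z_unif e_meas] by (auto intro!: nn_integral_mono)
  also have "\<dots> = (\<integral>\<^sup>+\<omega>. ennreal (\<Sum>i<n. (x i (V \<omega>) - a i (V \<omega>))\<^sup>2) \<partial>M) + ennreal (n * d\<^sup>2 / 12)"
    using x_meas a_meas by (subst nn_integral_add) (auto simp: emeasure_space_1)
  finally show ?thesis
    by (simp add: e_def)
qed

lemma neg_log_normal_density:
  assumes "\<sigma> > 0"
  shows "- log b (normal_density 0 \<sigma> u) = u\<^sup>2 / (2 * \<sigma>\<^sup>2 * ln b) + log b (2 * pi * \<sigma>\<^sup>2) / 2"
proof -
  have "0 < 2 * pi * \<sigma>\<^sup>2"
    using assms by simp
  then have "ln (normal_density 0 \<sigma> u) = - ln (2 * pi * \<sigma>\<^sup>2) / 2 - u\<^sup>2 / (2 * \<sigma>\<^sup>2)"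
    by (simp add: normal_density_def ln_mult ln_div ln_sqrt)
  then show ?thesis
    unfolding log_def by (cases "ln b = 0") (simp_all add: field_simps)
qed

lemma enn2real_lattice_gauss_mass_pos:
  "\<sigma> > 0 \<Longrightarrow> lattice_gauss_mass d \<sigma> t < \<infinity> \<Longrightarrow> 0 < enn2real (lattice_gauss_mass d \<sigma> t)"
  using lattice_gauss_mass_pos[of \<sigma> d t] by (simp add: enn2real_positive_iff)

lemma prod_lattice_gauss_pmf_pos:
  assumes "\<sigma> > 0" and "\<And>i. i < n \<Longrightarrow> lattice_gauss_mass d \<sigma> (t i) < \<infinity>"
  shows "0 < (\<Prod>i<n. lattice_gauss_pmf d \<sigma> (t i) (y ! i))"
  unfolding lattice_gauss_pmf_def using assms
  by (intro prod_pos divide_pos_pos normal_density_pos enn2real_lattice_gauss_mass_pos) auto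

lemma neg_log_prod_lattice_gauss_pmf_le:
  fixes b d \<sigma> :: real and t :: "nat \<Rightarrow> real" and y :: "real list"
  assumes "b > 1" and "d > 0" and "\<sigma> > 0" and finite_mass: "\<And>i. i < n \<Longrightarrow> lattice_gauss_mass d \<sigma> (t i) < \<infinity>"
  shows "- log b (\<Prod>i<n. lattice_gauss_pmf d \<sigma> (t i) (y ! i))
    \<le> (\<Sum>i<n. (y ! i - t i)\<^sup>2) / (2 * \<sigma>\<^sup>2 * ln b)
      + d / ln b * (\<Sum>i<n. enn2real (lattice_gauss_mass d \<sigma> (t i)))
      + n * (log b (2 * pi * \<sigma>\<^sup>2) / 2 - 1 / ln b - log b d)"
proof -
  define s where "s i = enn2real (lattice_gauss_mass d \<sigma> (t i))" for i
  have s_pos: "0 < s i" if "i < n" for i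
    using enn2real_lattice_gauss_mass_pos[OF \<open>\<sigma> > 0\<close> finite_mass[OF that]] by (simp add: s_def)
  have log_pmf: "log b (lattice_gauss_pmf d \<sigma> (t i) (y ! i)) = log b (normal_density 0 \<sigma> (y ! i - t i)) - log b (s i)"
    if "i \<in> {..<n}" for i
    using s_pos[of i] that normal_density_pos[OF \<open>\<sigma> > 0\<close>, of 0 "y ! i - t i"]
    by (simp add: lattice_gauss_pmf_def s_def[symmetric] log_divide)
  have "log b (\<Prod>i<n. lattice_gauss_pmf d \<sigma> (t i) (y ! i)) = (\<Sum>i<n. log b (lattice_gauss_pmf d \<sigma> (t i) (y ! i)))"
  proof -
    have "lattice_gauss_pmf d \<sigma> (t i) (y ! i) \<noteq> 0" if "i \<in> {..<n}" for i
      using s_pos[of i] that normal_density_pos[OF \<open>\<sigma> > 0\<close>, of 0 "y ! i - t i"]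
      by (simp add: lattice_gauss_pmf_def s_def[symmetric])
    then show ?thesis
      unfolding log_def by (subst ln_prod) (simp_all add: sum_divide_distrib)
  qed
  then have "- log b (\<Prod>i<n. lattice_gauss_pmf d \<sigma> (t i) (y ! i))
      = (\<Sum>i<n. - log b (normal_density 0 \<sigma> (y ! i - t i)) + log b (s i))"
    by (simp add: log_pmf sum_negf[symmetric])
  also have "\<dots> \<le> (\<Sum>i<n. (y ! i - t i)\<^sup>2 / (2 * \<sigma>\<^sup>2 * ln b) + log b (2 * pi * \<sigma>\<^sup>2) / 2
      + ((d * s i - 1) / ln b - log b d))"
  proof (intro sum_mono add_mono)
    fix i assume "i \<in> {..<n}"
    then have "0 < s i"
      using s_pos by simp
    then have "log b (s i) = log b (d * s i) - log b d"
      using \<open>d > 0\<close> \<open>b > 1\<close> by (simp add: log_mult)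
    also have "log b (d * s i) \<le> (d * s i - 1) / ln b"
      using \<open>0 < s i\<close> \<open>d > 0\<close> \<open>b > 1\<close> by (intro log_le_minus_one_div_ln) simp_all
    finally show "log b (s i) \<le> (d * s i - 1) / ln b - log b d"
      by simp
  qed (simp add: neg_log_normal_density[OF \<open>\<sigma> > 0\<close>])
  also have "\<dots> = (\<Sum>i<n. (y ! i - t i)\<^sup>2) / (2 * \<sigma>\<^sup>2 * ln b) + d / ln b * (\<Sum>i<n. s i)
      + n * (log b (2 * pi * \<sigma>\<^sup>2) / 2 - 1 / ln b - log b d)"
    by (simp add: sum.distrib sum_divide_distrib[symmetric] sum_distrib_left diff_divide_distrib
        sum_subtractf algebra_simps)
  finally show ?thesis
    by (simp add: s_def)
qed

definition lattice_gauss_channel :: "real \<Rightarrow> real \<Rightarrow> nat \<Rightarrow> real list \<times> real list \<times> real \<Rightarrow> real" where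
  "lattice_gauss_channel d \<sigma> n = (\<lambda>(y, xh, z). \<Prod>i<n. lattice_gauss_pmf d \<sigma> (z + xh ! i) (y ! i))"

lemma lattice_gauss_channel_nonneg: "0 \<le> lattice_gauss_channel d \<sigma> n x"
  unfolding lattice_gauss_channel_def lattice_gauss_pmf_def
  by (auto simp: case_prod_beta intro!: prod_nonneg divide_nonneg_nonneg)

lemma nn_integral_lattice_gauss_channel_le:
  "d > 0 \<Longrightarrow> \<sigma> > 0 \<Longrightarrow> (\<integral>\<^sup>+y. ennreal (lattice_gauss_channel d \<sigma> n (y, w)) \<partial>count_space (lattice_vecs d n)) \<le> 1"
  using nn_integral_prod_lattice_gauss_pmf_le[of d \<sigma> n "\<lambda>i. snd w + fst w ! i"]
  by (simp add: lattice_gauss_channel_def case_prod_beta)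

lemma countable_lattice_vecs: "countable (lattice_vecs d n)"
proof (rule countable_subset)
  show "lattice_vecs d n \<subseteq> lists (range (\<lambda>k::int. d * of_int k))"
    by (auto simp: lattice_vecs_def)
qed (intro countable_lists countable_image, simp)

lemma measurable_quant_list:
  assumes "\<And>i. i < n \<Longrightarrow> X i \<in> borel_measurable M"
  shows "(\<lambda>\<omega>. map (\<lambda>i. quant d (X i \<omega>)) [0..<n]) \<in> M \<rightarrow>\<^sub>M count_space (lattice_vecs d n)"
  unfolding measurable_count_space_eq_countable[OF countable_lattice_vecs]
proof safe
  fix \<omega>
  have "quant d x \<in> range (\<lambda>k::int. d * of_int k)" for x
    unfolding quant_def by (rule rangeI)
  then show "map (\<lambda>i. quant d (X i \<omega>)) [0..<n] \<in> lattice_vecs d n"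
    by (simp add: lattice_vecs_def image_subset_iff)
next
  fix y assume "y \<in> lattice_vecs d n"
  then have "length y = n"
    by (simp add: lattice_vecs_def)
  then have "map (\<lambda>i. quant d (X i \<omega>)) [0..<n] = y \<longleftrightarrow> (\<forall>i<n. quant d (X i \<omega>) = y ! i)" for \<omega>
    by (simp add: list_eq_iff_nth_eq)
  then have "(\<lambda>\<omega>. map (\<lambda>i. quant d (X i \<omega>)) [0..<n]) -` {y} \<inter> space M
      = {\<omega> \<in> space M. \<forall>i\<in>{..<n}. quant d (X i \<omega>) = y ! i}"
    by auto
  also have "\<dots> \<in> sets M"
  proof (rule sets.sets_Collect_finite_All)
    fix i assume "i \<in> {..<n}"
    then have "(\<lambda>\<omega>. quant d (X i \<omega>)) \<in> borel_measurable M"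
      using assms by (simp add: measurable_compose[OF _ borel_measurable_quant])
    from measurable_sets[OF this, of "{y ! i}"]
    show "{\<omega> \<in> space M. quant d (X i \<omega>) = y ! i} \<in> sets M"
      by (simp add: vimage_def Int_def conj_commute)
  qed simp
  finally show "(\<lambda>\<omega>. map (\<lambda>i. quant d (X i \<omega>)) [0..<n]) -` {y} \<inter> space M \<in> sets M" .
qed

lemma borel_measurable_lattice_gauss_channel:
  assumes "countable F"
  shows "lattice_gauss_channel d \<sigma> n \<in> borel_measurable (count_space (lattice_vecs d n) \<Otimes>\<^sub>M (count_space F \<Otimes>\<^sub>M lborel))"
  unfolding lattice_gauss_channel_def lattice_gauss_pmf_def
  by (intro measurable_pair_measure_countable1 countable_lattice_vecs assms) simp_all

lemma (in prob_space) AE_distributed_not_in_countable: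
  assumes "distributed M lborel X f" and "countable A"
  shows "AE \<omega> in M. X \<omega> \<notin> A"
proof -
  have "A \<in> null_sets (distr M lborel X)"
    using countable_imp_null_set_lborel[OF \<open>countable A\<close>] distributed_distr_eq_density[OF assms(1)]
      absolutely_continuousI_density[OF distributed_borel_measurable[OF assms(1)]]
    unfolding absolutely_continuous_def by auto
  then have "X -` A \<inter> space M \<in> null_sets M"
    using distributed_measurable[OF assms(1)] by (auto simp: null_sets_def emeasure_distr)
  from AE_not_in[OF this] AE_space show ?thesis
    by eventually_elim auto
qed

lemma gauss_dither_bound_eq:
  fixes b d \<sigma> :: real and n :: nat
  assumes "b > 1" and "\<sigma> > 0" and "d > 0"
  shows "3 * real n / (2 * ln b) + n * (log b (2 * pi * \<sigma>\<^sup>2) / 2 - 1 / ln b - log b d)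
    = n / 2 * log b (2 * pi * exp 1 * \<sigma>\<^sup>2 / d\<^sup>2)"
proof -
  have log_eq: "log b (2 * pi * exp 1 * \<sigma>\<^sup>2 / d\<^sup>2) = 1 / ln b + log b (2 * pi * \<sigma>\<^sup>2) - 2 * log b d"
    using assms by (simp add: log_divide log_mult log_nat_power)
  show ?thesis
    unfolding log_eq using assms by (simp add: field_simps)
qed

lemma log_gauss_dither_bound_nonneg:
  fixes b d \<sigma> :: real
  assumes "b > 1" and "d > 0" and "d\<^sup>2 \<le> 12 * \<sigma>\<^sup>2"
  shows "0 \<le> log b (2 * pi * exp 1 * \<sigma>\<^sup>2 / d\<^sup>2)"
proof -
  have "12 \<le> 2 * pi * exp (1::real)"
    using mult_mono[of 6 "2 * pi" 2 "exp 1"] pi_gt3 exp_ge_add_one_self[of 1] by simp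
  then have "12 * \<sigma>\<^sup>2 \<le> 2 * pi * exp 1 * \<sigma>\<^sup>2"
    by (rule mult_right_mono) simp
  with assms have "1 \<le> 2 * pi * exp 1 * \<sigma>\<^sup>2 / d\<^sup>2"
    by simp
  with \<open>b > 1\<close> show ?thesis
    by simp
qed

locale dithered_quantization = prob_space M for M :: "'a measure" +
  fixes n :: nat and d :: real and X :: "nat \<Rightarrow> 'a \<Rightarrow> real" and Xh :: "'a \<Rightarrow> real list"
    and Z :: "'a \<Rightarrow> real"
  assumes d_pos: "0 < d"
    and source_measurable: "(\<lambda>\<omega>. ((\<lambda>i\<in>{..<n}. X i \<omega>), Xh \<omega>))
      \<in> M \<rightarrow>\<^sub>M PiM {..<n} (\<lambda>_. lborel) \<Otimes>\<^sub>M count_space UNIV"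
    and finite_Xh: "finite (Xh ` space M)"
    and Z_measurable [measurable]: "Z \<in> borel_measurable M"
    and Z_uniform: "distr M lborel Z = uniform_measure lborel {-d/2..d/2}"
    and indep_source_dither: "indep_set
      {(\<lambda>\<omega>. ((\<lambda>i\<in>{..<n}. X i \<omega>), Xh \<omega>)) -` A \<inter> space M | A. A \<in> sets (PiM {..<n} (\<lambda>_. lborel) \<Otimes>\<^sub>M count_space UNIV)}
      {Z -` B \<inter> space M | B. B \<in> sets lborel}"
begin

lemma X_measurable [measurable]:
  assumes "i < n"
  shows "X i \<in> borel_measurable M"
proof -
  have "(\<lambda>\<omega>. fst ((\<lambda>i\<in>{..<n}. X i \<omega>), Xh \<omega>) i) \<in> borel_measurable M"
    using measurable_compose[OF measurable_compose[OF source_measurable measurable_fst]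
        measurable_component_singleton[of i "{..<n}" "\<lambda>_. lborel"]] assms
    by simp
  with assms show ?thesis
    by simp
qed

lemma Xh_measurable [measurable]: "Xh \<in> M \<rightarrow>\<^sub>M count_space (Xh ` space M)"
proof -
  have "Xh \<in> M \<rightarrow>\<^sub>M count_space UNIV"
    using measurable_compose[OF source_measurable measurable_snd] by simp
  then show ?thesis
    unfolding measurable_count_space_eq2[OF finite_Xh] by (auto dest: measurable_sets)
qed

lemma Xh_nth_measurable [measurable]: "(\<lambda>\<omega>. Xh \<omega> ! i) \<in> borel_measurable M"
  by (rule measurable_compose[OF Xh_measurable borel_measurable_count_space])

lemma absolutely_continuous_side_information:
  "absolutely_continuous (count_space (Xh ` space M) \<Otimes>\<^sub>M lborel)
    (distr M (count_space (Xh ` space M) \<Otimes>\<^sub>M lborel) (\<lambda>\<omega>. (Xh \<omega>, Z \<omega>)))"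
proof (rule absolutely_continuous_count_space_pair)
  show "absolutely_continuous lborel (distr M lborel (\<lambda>\<omega>. snd (Xh \<omega>, Z \<omega>)))"
    unfolding snd_conv Z_uniform uniform_measure_def by (rule absolutely_continuousI_density) measurable
qed (simp_all add: countable_finite finite_Xh lborel.sigma_finite_measure_axioms)

lemma nn_integral_sq_error_pos:
  assumes "0 < n" and "distributed M lborel (X 0) f"
  shows "0 < (\<integral>\<^sup>+\<omega>. ennreal (\<Sum>i<n. (X i \<omega> - Xh \<omega> ! i)\<^sup>2) \<partial>M)"
proof (rule ccontr)
  assume "\<not> ?thesis"
  then have "(\<integral>\<^sup>+\<omega>. ennreal (\<Sum>i<n. (X i \<omega> - Xh \<omega> ! i)\<^sup>2) \<partial>M) = 0"
    by (simp add: not_gr_zero)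
  then have "AE \<omega> in M. ennreal (\<Sum>i<n. (X i \<omega> - Xh \<omega> ! i)\<^sup>2) = 0"
    by (subst (asm) nn_integral_0_iff_AE) (auto intro!: borel_measurable_sum)
  then have "AE \<omega> in M. X 0 \<omega> \<in> (\<lambda>l. l ! 0) ` Xh ` space M"
    using AE_space
  proof eventually_elim
    case (elim \<omega>)
    then have "(\<Sum>i<n. (X i \<omega> - Xh \<omega> ! i)\<^sup>2) = 0"
      by (simp add: sum_nonneg)
    then have "X 0 \<omega> = Xh \<omega> ! 0"
      using \<open>0 < n\<close> by (subst (asm) sum_nonneg_eq_0_iff) auto
    with elim show ?case
      by auto
  qed
  moreover have "AE \<omega> in M. X 0 \<omega> \<notin> (\<lambda>l. l ! 0) ` Xh ` space M"
    using finite_Xh by (intro AE_distributed_not_in_countable[OF assms(2)] countable_finite) simp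
  ultimately have "AE \<omega> in M. False"
    by eventually_elim simp
  then show False
    by simp
qed

lemma nn_integral_lattice_gauss_mass_side_le:
  assumes "\<sigma> > 0"
  shows "(\<integral>\<^sup>+\<omega>. lattice_gauss_mass d \<sigma> (Z \<omega> + Xh \<omega> ! i) \<partial>M) \<le> ennreal (1 / d)"
proof -
  have "(\<lambda>v. snd v ! i) \<in> borel_measurable (PiM {..<n} (\<lambda>_. lborel) \<Otimes>\<^sub>M count_space UNIV)"
    by (rule measurable_compose[OF measurable_snd borel_measurable_count_space])
  from nn_integral_lattice_gauss_mass_dither_le[OF source_measurable Z_measurable indep_source_dither
      d_pos Z_uniform assms this]
  show ?thesis
    by simp
qed

lemma AE_lattice_gauss_mass_finite:
  assumes "\<sigma> > 0"
  shows "AE \<omega> in M. \<forall>i<n. lattice_gauss_mass d \<sigma> (Z \<omega> + Xh \<omega> ! i) < \<infinity>"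
proof -
  have "AE \<omega> in M. lattice_gauss_mass d \<sigma> (Z \<omega> + Xh \<omega> ! i) \<noteq> \<infinity>" for i
    using nn_integral_lattice_gauss_mass_side_le[OF assms, of i]
    by (intro nn_integral_noteq_infinite) (auto simp: top_unique)
  then show ?thesis
    by (subst AE_all_countable) (auto simp: less_top elim: eventually_mono)
qed

lemma AE_lattice_gauss_channel_pos:
  assumes "\<sigma> > 0"
  shows "AE \<omega> in M. 0 < lattice_gauss_channel d \<sigma> n (y \<omega>, Xh \<omega>, Z \<omega>)"
  using AE_lattice_gauss_mass_finite[OF assms]
  by eventually_elim (simp add: lattice_gauss_channel_def prod_lattice_gauss_pmf_pos[OF assms])

lemma nn_integral_dither_error_le:
  "(\<integral>\<^sup>+\<omega>. ennreal (\<Sum>i<n. (quant d (X i \<omega> + Z \<omega>) - Z \<omega> - Xh \<omega> ! i)\<^sup>2) \<partial>M)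
    \<le> (\<integral>\<^sup>+\<omega>. ennreal (\<Sum>i<n. (X i \<omega> - Xh \<omega> ! i)\<^sup>2) \<partial>M) + ennreal (n * d\<^sup>2 / 12)"
proof -
  have fst_meas: "(\<lambda>v. fst v i) \<in> borel_measurable (PiM {..<n} (\<lambda>_. lborel) \<Otimes>\<^sub>M count_space UNIV)"
    if "i < n" for i
    using that by (auto intro!: measurable_compose[OF measurable_fst measurable_component_singleton])
  have snd_meas: "(\<lambda>v. snd v ! i) \<in> borel_measurable (PiM {..<n} (\<lambda>_. lborel) \<Otimes>\<^sub>M count_space UNIV)" for i
    by (rule measurable_compose[OF measurable_snd borel_measurable_count_space])
  have "(\<Sum>i<n. (quant d ((\<lambda>i\<in>{..<n}. X i \<omega>) i + Z \<omega>) - Z \<omega> - Xh \<omega> ! i)\<^sup>2)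
      = (\<Sum>i<n. (quant d (X i \<omega> + Z \<omega>) - Z \<omega> - Xh \<omega> ! i)\<^sup>2)"
    "(\<Sum>i<n. ((\<lambda>i\<in>{..<n}. X i \<omega>) i - Xh \<omega> ! i)\<^sup>2) = (\<Sum>i<n. (X i \<omega> - Xh \<omega> ! i)\<^sup>2)" for \<omega>
    by (auto intro!: sum.cong)
  with nn_integral_dithered_quant_error_le[where n = n and x = "\<lambda>i v. fst v i" and a = "\<lambda>i v. snd v ! i",
        OF source_measurable Z_measurable indep_source_dither d_pos Z_uniform fst_meas snd_meas]
  show ?thesis
    by (simp only: fst_conv snd_conv)
qed


lemma nn_integral_sum_lattice_gauss_mass_le:
  assumes "\<sigma> > 0"
  shows "(\<integral>\<^sup>+\<omega>. ennreal (\<Sum>i<n. enn2real (lattice_gauss_mass d \<sigma> (Z \<omega> + Xh \<omega> ! i))) \<partial>M) \<le> ennreal (n / d)"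
proof -
  have "(\<integral>\<^sup>+\<omega>. ennreal (\<Sum>i<n. enn2real (lattice_gauss_mass d \<sigma> (Z \<omega> + Xh \<omega> ! i))) \<partial>M)
      = (\<Sum>i<n. \<integral>\<^sup>+\<omega>. ennreal (enn2real (lattice_gauss_mass d \<sigma> (Z \<omega> + Xh \<omega> ! i))) \<partial>M)"
    by (subst nn_integral_sum[symmetric]) (auto simp: sum_ennreal)
  also have "\<dots> \<le> (\<Sum>i<n. ennreal (1 / d))"
  proof (intro sum_mono)
    fix i
    have "(\<integral>\<^sup>+\<omega>. ennreal (enn2real (lattice_gauss_mass d \<sigma> (Z \<omega> + Xh \<omega> ! i))) \<partial>M)
        \<le> (\<integral>\<^sup>+\<omega>. lattice_gauss_mass d \<sigma> (Z \<omega> + Xh \<omega> ! i) \<partial>M)"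
      by (intro nn_integral_mono) (simp add: ennreal_enn2real_if)
    also have "\<dots> \<le> ennreal (1 / d)"
      by (rule nn_integral_lattice_gauss_mass_side_le[OF assms])
    finally show "(\<integral>\<^sup>+\<omega>. ennreal (enn2real (lattice_gauss_mass d \<sigma> (Z \<omega> + Xh \<omega> ! i))) \<partial>M) \<le> ennreal (1 / d)" .
  qed
  also have "\<dots> = ennreal (n / d)"
    using d_pos by (simp add: ennreal_of_nat_eq_real_of_nat ennreal_mult[symmetric])
  finally show ?thesis .
qed

lemma measurable_quantized [measurable]:
  "(\<lambda>\<omega>. map (\<lambda>i. quant d (X i \<omega> + Z \<omega>)) [0..<n]) \<in> M \<rightarrow>\<^sub>M count_space (lattice_vecs d n)"
  by (rule measurable_quant_list) measurable

lemma absolutely_continuous_quantized_side_information: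
  "absolutely_continuous (count_space (lattice_vecs d n) \<Otimes>\<^sub>M (count_space (Xh ` space M) \<Otimes>\<^sub>M lborel))
    (distr M (count_space (lattice_vecs d n) \<Otimes>\<^sub>M (count_space (Xh ` space M) \<Otimes>\<^sub>M lborel))
      (\<lambda>\<omega>. (map (\<lambda>i. quant d (X i \<omega> + Z \<omega>)) [0..<n], Xh \<omega>, Z \<omega>)))"
  using absolutely_continuous_side_information finite_Xh
  by (intro absolutely_continuous_count_space_pair[OF countable_lattice_vecs]
      sigma_finite_pair_measure sigma_finite_measure_count_space_finite lborel.sigma_finite_measure_axioms) simp_all

lemma AE_neg_log_lattice_gauss_channel_le:
  fixes b \<sigma> :: real
  assumes "b > 1" and "\<sigma> > 0"
  shows "AE \<omega> in M. - log b (lattice_gauss_channel d \<sigma> n (map (\<lambda>i. quant d (X i \<omega> + Z \<omega>)) [0..<n], Xh \<omega>, Z \<omega>))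
    \<le> (\<Sum>i<n. (quant d (X i \<omega> + Z \<omega>) - Z \<omega> - Xh \<omega> ! i)\<^sup>2) / (2 * \<sigma>\<^sup>2 * ln b)
      + d / ln b * (\<Sum>i<n. enn2real (lattice_gauss_mass d \<sigma> (Z \<omega> + Xh \<omega> ! i)))
      + n * (log b (2 * pi * \<sigma>\<^sup>2) / 2 - 1 / ln b - log b d)"
  using AE_lattice_gauss_mass_finite[OF \<open>\<sigma> > 0\<close>]
proof eventually_elim
  case (elim \<omega>)
  have "(\<Sum>i<n. (map (\<lambda>i. quant d (X i \<omega> + Z \<omega>)) [0..<n] ! i - (Z \<omega> + Xh \<omega> ! i))\<^sup>2)
      = (\<Sum>i<n. (quant d (X i \<omega> + Z \<omega>) - Z \<omega> - Xh \<omega> ! i)\<^sup>2)"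
    by (auto intro!: sum.cong simp: algebra_simps)
  with neg_log_prod_lattice_gauss_pmf_le[OF \<open>b > 1\<close> d_pos \<open>\<sigma> > 0\<close>, of n "\<lambda>i. Z \<omega> + Xh \<omega> ! i"
      "map (\<lambda>i. quant d (X i \<omega> + Z \<omega>)) [0..<n]"] elim
  show ?case
    by (simp add: lattice_gauss_channel_def)
qed

lemma nn_integral_lattice_gauss_channel_cost_le:
  fixes b \<sigma> :: real
  assumes "b > 1" and "\<sigma> > 0"
    and error_le: "(\<integral>\<^sup>+\<omega>. ennreal (\<Sum>i<n. (X i \<omega> - Xh \<omega> ! i)\<^sup>2) \<partial>M) + ennreal (n * d\<^sup>2 / 12) \<le> ennreal (n * \<sigma>\<^sup>2)"
  shows "(\<integral>\<^sup>+\<omega>. ennreal ((\<Sum>i<n. (quant d (X i \<omega> + Z \<omega>) - Z \<omega> - Xh \<omega> ! i)\<^sup>2) / (2 * \<sigma>\<^sup>2 * ln b)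
      + d / ln b * (\<Sum>i<n. enn2real (lattice_gauss_mass d \<sigma> (Z \<omega> + Xh \<omega> ! i)))) \<partial>M)
    \<le> ennreal (3 * real n / (2 * ln b))"
proof -
  have "(\<integral>\<^sup>+\<omega>. ennreal (1 / (2 * \<sigma>\<^sup>2 * ln b) * (\<Sum>i<n. (quant d (X i \<omega> + Z \<omega>) - Z \<omega> - Xh \<omega> ! i)\<^sup>2)
      + d / ln b * (\<Sum>i<n. enn2real (lattice_gauss_mass d \<sigma> (Z \<omega> + Xh \<omega> ! i)))) \<partial>M)
    \<le> ennreal (1 / (2 * \<sigma>\<^sup>2 * ln b) * (n * \<sigma>\<^sup>2) + d / ln b * (n / d))"
  proof (rule nn_integral_add_scaled_le)
    show "(\<integral>\<^sup>+\<omega>. ennreal (\<Sum>i<n. (quant d (X i \<omega> + Z \<omega>) - Z \<omega> - Xh \<omega> ! i)\<^sup>2) \<partial>M) \<le> ennreal (n * \<sigma>\<^sup>2)"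
      using nn_integral_dither_error_le error_le by (rule order_trans)
    show "(\<integral>\<^sup>+\<omega>. ennreal (\<Sum>i<n. enn2real (lattice_gauss_mass d \<sigma> (Z \<omega> + Xh \<omega> ! i))) \<partial>M) \<le> ennreal (n / d)"
      by (rule nn_integral_sum_lattice_gauss_mass_le[OF \<open>\<sigma> > 0\<close>])
  qed (use \<open>b > 1\<close> d_pos in \<open>auto intro!: sum_nonneg\<close>)
  moreover have "1 / (2 * \<sigma>\<^sup>2 * ln b) * (n * \<sigma>\<^sup>2) + d / ln b * (n / d) = 3 * real n / (2 * ln b)"
    using \<open>\<sigma> > 0\<close> d_pos by (simp add: field_simps)
  ultimately show ?thesis
    by simp
qed

lemma dither_step_sq_le:
  fixes \<sigma> :: real
  assumes "0 < n"
    and error_le: "(\<integral>\<^sup>+\<omega>. ennreal (\<Sum>i<n. (X i \<omega> - Xh \<omega> ! i)\<^sup>2) \<partial>M) + ennreal (n * d\<^sup>2 / 12) \<le> ennreal (n * \<sigma>\<^sup>2)"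
  shows "d\<^sup>2 \<le> 12 * \<sigma>\<^sup>2"
proof -
  have "ennreal (n * d\<^sup>2 / 12) \<le> ennreal (n * \<sigma>\<^sup>2)"
    using error_le by (rule order_trans[rotated]) simp
  moreover have "0 < n * d\<^sup>2"
    using \<open>0 < n\<close> d_pos by simp
  ultimately have "real n * d\<^sup>2 \<le> real n * (12 * \<sigma>\<^sup>2)"
    by (auto simp: ennreal_le_iff2)
  then show ?thesis
    using \<open>0 < n\<close> by (simp add: mult_le_cancel_left_pos)
qed

lemma conditional_entropy_quantized_le:
  fixes b \<sigma> :: real
  assumes "b > 1" and "\<sigma> > 0"
    and error_le: "(\<integral>\<^sup>+\<omega>. ennreal (\<Sum>i<n. (X i \<omega> - Xh \<omega> ! i)\<^sup>2) \<partial>M) + ennreal (n * d\<^sup>2 / 12) \<le> ennreal (n * \<sigma>\<^sup>2)"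
  shows "conditional_entropy b (count_space (lattice_vecs d n)) (count_space (Xh ` space M) \<Otimes>\<^sub>M lborel)
      (\<lambda>\<omega>. map (\<lambda>i. quant d (X i \<omega> + Z \<omega>)) [0..<n]) (\<lambda>\<omega>. (Xh \<omega>, Z \<omega>))
    \<le> n / 2 * log b (2 * pi * exp 1 * \<sigma>\<^sup>2 / d\<^sup>2)"
proof -
  define c where "c = n * (log b (2 * pi * \<sigma>\<^sup>2) / 2 - 1 / ln b - log b d)"
  have bound_eq: "3 * real n / (2 * ln b) + c = n / 2 * log b (2 * pi * exp 1 * \<sigma>\<^sup>2 / d\<^sup>2)"
    unfolding c_def using \<open>b > 1\<close> \<open>\<sigma> > 0\<close> d_pos by (rule gauss_dither_bound_eq)
  have bound_nonneg: "0 \<le> n / 2 * log b (2 * pi * exp 1 * \<sigma>\<^sup>2 / d\<^sup>2)"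
    using dither_step_sq_le[OF _ error_le] log_gauss_dither_bound_nonneg[OF \<open>b > 1\<close> d_pos]
    by (cases "n = 0") simp_all
  have "conditional_entropy b (count_space (lattice_vecs d n)) (count_space (Xh ` space M) \<Otimes>\<^sub>M lborel)
      (\<lambda>\<omega>. map (\<lambda>i. quant d (X i \<omega> + Z \<omega>)) [0..<n]) (\<lambda>\<omega>. (Xh \<omega>, Z \<omega>)) \<le> 3 * real n / (2 * ln b) + c"
  proof (rule conditional_entropy_le_cross_entropy[where q = "lattice_gauss_channel d \<sigma> n", OF \<open>b > 1\<close> _ _
      measurable_quantized _ absolutely_continuous_quantized_side_information absolutely_continuous_side_information
      borel_measurable_lattice_gauss_channel lattice_gauss_channel_nonneg
      nn_integral_lattice_gauss_channel_le[OF d_pos \<open>\<sigma> > 0\<close>] AE_lattice_gauss_channel_pos[OF \<open>\<sigma> > 0\<close>]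
      AE_neg_log_lattice_gauss_channel_le[OF \<open>b > 1\<close> \<open>\<sigma> > 0\<close>, folded c_def] _ _
      nn_integral_lattice_gauss_channel_cost_le[OF \<open>b > 1\<close> \<open>\<sigma> > 0\<close> error_le]])
    show "sigma_finite_measure (count_space (lattice_vecs d n))"
      by (rule sigma_finite_measure_count_space_countable[OF countable_lattice_vecs])
    show "sigma_finite_measure (count_space (Xh ` space M) \<Otimes>\<^sub>M (lborel :: real measure))"
      using finite_Xh
      by (intro sigma_finite_pair_measure sigma_finite_measure_count_space_finite lborel.sigma_finite_measure_axioms)
  qed (use \<open>b > 1\<close> \<open>\<sigma> > 0\<close> d_pos bound_nonneg bound_eq in
      \<open>auto simp: countable_finite[OF finite_Xh] intro!: add_nonneg_nonneg divide_nonneg_nonneg mult_nonneg_nonneg sum_nonneg\<close>)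
  with bound_eq show ?thesis
    by simp
qed

end

theorem mainTheorem7:
  fixes M :: "'a measure" and n :: nat and D D' :: real
    and X :: "nat \<Rightarrow> 'a \<Rightarrow> real" and Xh :: "'a \<Rightarrow> real list" and Z :: "'a \<Rightarrow> real"
  assumes "prob_space M"
    and "D > 0" and "n > 0"
    and dens: "\<forall>i<n. \<exists>f. distributed M lborel (X i) f"
    and Xh_meas: "Xh \<in> measurable M (count_space UNIV)"
    and Xh_fin: "finite (Xh ` space M)"
    and Xh_len: "\<forall>\<omega>\<in>space M. length (Xh \<omega>) = n"
    and dist: "(\<integral>\<^sup>+ \<omega>. ennreal (\<Sum>i<n. (X i \<omega> - Xh \<omega> ! i)\<^sup>2) \<partial>M) / ennreal (real n) \<le> ennreal D'"
    and Z_unif: "distr M lborel Z = uniform_measure lborel {- (2 * sqrt (3 * D)) / 2 .. (2 * sqrt (3 * D)) / 2}"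
    and V_meas: "(\<lambda>\<omega>. ((\<lambda>i\<in>{..<n}. X i \<omega>), Xh \<omega>))
        \<in> measurable M (PiM {..<n} (\<lambda>_. lborel) \<Otimes>\<^sub>M count_space UNIV)"
    and Z_meas: "Z \<in> borel_measurable M"
    and indep: "prob_space.indep_set M
        {(\<lambda>\<omega>. ((\<lambda>i\<in>{..<n}. X i \<omega>), Xh \<omega>)) -` A \<inter> space M | A.
           A \<in> sets (PiM {..<n} (\<lambda>_. lborel) \<Otimes>\<^sub>M count_space UNIV)}
        {Z -` B \<inter> space M | B. B \<in> sets lborel}"
  shows "prob_space.conditional_entropy M 2
           (count_space (lattice_vecs (2 * sqrt (3 * D)) n))
           (count_space (Xh ` space M) \<Otimes>\<^sub>M lborel)
           (\<lambda>\<omega>. map (\<lambda>i. quant (2 * sqrt (3 * D)) (X i \<omega> + Z \<omega>)) [0..<n])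
           (\<lambda>\<omega>. (Xh \<omega>, Z \<omega>))
         \<le> real n / 2 * log 2 (pi * exp 1 / 6 * (D' / D + 1))"
proof -
  interpret prob_space M by fact
  define d where "d = 2 * sqrt (3 * D)"
  have "d > 0" and d_sq: "d\<^sup>2 = 12 * D"
    using \<open>D > 0\<close> by (simp_all add: d_def power_mult_distrib)
  interpret dithered_quantization M n d X Xh Z
    using \<open>d > 0\<close> V_meas Xh_fin Z_meas Z_unif indep by unfold_locales (simp_all add: d_def)
  have error_le: "(\<integral>\<^sup>+\<omega>. ennreal (\<Sum>i<n. (X i \<omega> - Xh \<omega> ! i)\<^sup>2) \<partial>M) \<le> ennreal D' * ennreal n"
    using mult_right_mono[OF dist, of "ennreal n"] \<open>n > 0\<close>
    by (simp add: ennreal_divide_times ennreal_divide_self)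
  obtain f where "distributed M lborel (X 0) f"
    using dens \<open>n > 0\<close> by blast
  \<comment> \<open>\<open>X 0\<close> has a density while \<open>Xh\<close> takes finitely many values, so the distortion is positive.\<close>
  then have "D' \<ge> 0"
    using nn_integral_sq_error_pos[OF \<open>n > 0\<close>] error_le by (cases "D' \<ge> 0") (auto simp: ennreal_neg)
  define \<sigma> where "\<sigma> = sqrt (D + D')"
  have "\<sigma> > 0" and \<sigma>_sq: "\<sigma>\<^sup>2 = D + D'"
    using \<open>D > 0\<close> \<open>D' \<ge> 0\<close> by (simp_all add: \<sigma>_def)
  have "(\<integral>\<^sup>+\<omega>. ennreal (\<Sum>i<n. (X i \<omega> - Xh \<omega> ! i)\<^sup>2) \<partial>M) + ennreal (n * d\<^sup>2 / 12) \<le> ennreal (n * \<sigma>\<^sup>2)"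
    using add_mono[OF error_le order_refl, of "ennreal (n * D)"] \<open>D > 0\<close> \<open>D' \<ge> 0\<close>
    by (simp add: d_sq \<sigma>_sq ennreal_mult[symmetric] ennreal_plus[symmetric] algebra_simps del: ennreal_plus)
  from conditional_entropy_quantized_le[OF _ \<open>\<sigma> > 0\<close> this, of 2]
  have "conditional_entropy 2 (count_space (lattice_vecs d n)) (count_space (Xh ` space M) \<Otimes>\<^sub>M lborel)
      (\<lambda>\<omega>. map (\<lambda>i. quant d (X i \<omega> + Z \<omega>)) [0..<n]) (\<lambda>\<omega>. (Xh \<omega>, Z \<omega>))
    \<le> n / 2 * log 2 (2 * pi * exp 1 * \<sigma>\<^sup>2 / d\<^sup>2)"
    by simp
  also have "2 * pi * exp 1 * \<sigma>\<^sup>2 / d\<^sup>2 = pi * exp 1 / 6 * (D' / D + 1)"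
    using \<open>D > 0\<close> by (simp add: \<sigma>_sq d_sq field_simps)
  finally show ?thesis
    by (simp add: d_def)
qed

end
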